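(* Let $p$ be an odd prime and let $\mathcal{A}\subseteq\mathbb{F}_p$. Then \[|T_{2,2}(\mathcal{A}\times\mathcal{A})|\ge \frac{1}{6}\left(|\mathcal{A}|^2-2\right)\cdot|\Delta_{\mathbb{F}_p}(\mathcal{A}\times\mathcal{A})|,\] where $\Delta_{\mathbb{F}_p}(\mathcal{A}\times\mathcal{A})=\{\|\mathbf{x}-\mathbf{y}\|:\mathbf{x},\mathbf{y}\in\mathcal{A}\times\mathcal{A}\}$ is the set of distinct distances determined by points of $\mathcal{A}\times\mathcal{A}$.
   Context: For $\mathbf{x}=(x_1,x_2),\mathbf{y}=(y_1,y_2)\in\mathbb{F}_p^2$, $\|\mathbf{x}-\mathbf{y}\|=(x_1-y_1)^2+(x_2-y_2)^2$. For $\mathcal{E}\subseteq\mathbb{F}_p^2$, a triangle determined by $\mathcal{E}$ is a triple $(\mathbf{x}_1,\mathbf{x}_2,\mathbf{x}_3)$ of points of $\mathcal{E}$. Two triangles $(\mathbf{x}_1,\mathbf{x}_2,\mathbf{x}_3)$ and $(\mathbf{y}_1,\mathbf{y}_2,\mathbf{y}_3)$ are in the same congruence class if there exist an orthogonal $2\times2$ matrix $\theta$ over $\mathbb{F}_p$ ($\theta^T\theta=I$) and $\mathbf{z}\in\mathbb{F}_p^2$ with $\mathbf{z}+\theta\mathbf{x}_i=\mathbf{y}_i$ for $i=1,2,3$. $T_{2,2}(\mathcal{E})$ is the set of congruence classes of triangles determined by points of $\mathcal{E}$. *)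

theory Defs
  imports Complex_Main "HOL-Computational_Algebra.Primes"
begin

text \<open>F_p is modelled by the residues {0..<p} of int with arithmetic mod p;
  points of F_p^2 are pairs of such residues.\<close>

definition Fp :: "int \<Rightarrow> int set" where
  "Fp p = {0..<p}"

definition sqdist :: "int \<Rightarrow> int \<times> int \<Rightarrow> int \<times> int \<Rightarrow> int" where
  "sqdist p x y = ((fst x - fst y)^2 + (snd x - snd y)^2) mod p"

text \<open>A 2x2 matrix [[a,b],[c,d]] is encoded as (a,b,c,d).\<close>
definition orth :: "int \<Rightarrow> int \<times> int \<times> int \<times> int \<Rightarrow> bool" where
  "orth p M = (case M of (a,b,c,d) \<Rightarrow>
     a \<in> Fp p \<and> b \<in> Fp p \<and> c \<in> Fp p \<and> d \<in> Fp p \<and>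
     (a*a + c*c) mod p = 1 \<and> (a*b + c*d) mod p = 0 \<and> (b*b + d*d) mod p = 1)"

definition mat_app :: "int \<Rightarrow> int \<times> int \<times> int \<times> int \<Rightarrow> int \<times> int \<Rightarrow> int \<times> int" where
  "mat_app p M x = (case M of (a,b,c,d) \<Rightarrow>
     ((a * fst x + b * snd x) mod p, (c * fst x + d * snd x) mod p))"

definition rigid :: "int \<Rightarrow> int \<times> int \<Rightarrow> int \<times> int \<times> int \<times> int \<Rightarrow> int \<times> int \<Rightarrow> int \<times> int" where
  "rigid p z M x = ((fst z + fst (mat_app p M x)) mod p, (snd z + snd (mat_app p M x)) mod p)"

definition triangles :: "(int \<times> int) set \<Rightarrow> ((int \<times> int) \<times> (int \<times> int) \<times> (int \<times> int)) set" where
  "triangles E = {(x1, x2, x3). x1 \<in> E \<and> x2 \<in> E \<and> x3 \<in> E}"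

definition congruent :: "int \<Rightarrow> (int \<times> int) \<times> (int \<times> int) \<times> (int \<times> int)
    \<Rightarrow> (int \<times> int) \<times> (int \<times> int) \<times> (int \<times> int) \<Rightarrow> bool" where
  "congruent p t s = (case t of (x1, x2, x3) \<Rightarrow> case s of (y1, y2, y3) \<Rightarrow>
     (\<exists>M z. orth p M \<and> z \<in> Fp p \<times> Fp p \<and>
        rigid p z M x1 = y1 \<and> rigid p z M x2 = y2 \<and> rigid p z M x3 = y3))"

definition T22 :: "int \<Rightarrow> (int \<times> int) set
    \<Rightarrow> ((int \<times> int) \<times> (int \<times> int) \<times> (int \<times> int)) set set" where
  "T22 p E = (\<lambda>t. {s \<in> triangles (Fp p \<times> Fp p). congruent p t s}) ` triangles E"

definition Delta :: "int \<Rightarrow> (int \<times> int) set \<Rightarrow> int set" where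
  "Delta p E = {sqdist p x y | x y. x \<in> E \<and> y \<in> E}"

end

theory Submission
  imports Defs
begin

text \<open>Congruent triangles have the same triple of side lengths, so it suffices to count such
  triples. Pick for every nonzero distance \<open>d\<close> a pair \<open>(x, y)\<close> at distance \<open>d\<close>. Since \<open>p\<close> is odd,
  a point \<open>z\<close> is determined by its distances to \<open>x\<close> and \<open>y\<close> and the orientation of \<open>(x, y, z)\<close>,
  so \<open>(d, z) \<mapsto> (side lengths of (x, y, z), orientation)\<close> is injective. This gives
  \<open>(|\<Delta>| - 1) |A|\<^sup>2 \<le> 2 |T\<^sub>2\<^sub>,\<^sub>2|\<close>, which implies the bound because \<open>|\<Delta>| \<ge> 2\<close> once \<open>|A| \<ge> 2\<close>.\<close>

lemma odd_prime_dvd_mult_2_iff: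
  fixes p a :: int
  assumes "prime p" and "odd p"
  shows "p dvd 2 * a \<longleftrightarrow> p dvd a"
proof -
  have "\<not> p dvd 2"
  proof
    assume "p dvd 2"
    then have "p \<le> 2" by (simp add: zdvd_imp_le)
    with prime_ge_2_int[OF \<open>prime p\<close>] have "p = 2" by simp
    with \<open>odd p\<close> show False by simp
  qed
  then show ?thesis using \<open>prime p\<close> by (simp add: prime_dvd_mult_iff)
qed

lemma Fp_eq_if_dvd_diff: "a \<in> Fp p \<Longrightarrow> b \<in> Fp p \<Longrightarrow> p dvd a - b \<Longrightarrow> a = b"
  unfolding Fp_def by (metis atLeastLessThan_iff mod_eq_dvd_iff mod_pos_pos_trivial)

lemma mod_eq_if_dvd_add_same_half:
  fixes p s s' :: int
  assumes "odd p" "p > 0" and "p dvd s + s'"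
    and same_half: "(2 * (s mod p) < p) = (2 * (s' mod p) < p)"
  shows "s mod p = s' mod p"
proof -
  define r r' where "r = s mod p" and "r' = s' mod p"
  have bounds: "0 \<le> r" "r < p" "0 \<le> r'" "r' < p" using \<open>p > 0\<close> by (simp_all add: r_def r'_def)
  have "p dvd r + r'" using \<open>p dvd s + s'\<close> by (simp add: r_def r'_def dvd_eq_mod_eq_0 mod_add_eq)
  then obtain k where k: "r + r' = p * k" by blast
  have "0 \<le> p * k" "p * k < p * 2" using k bounds by linarith+
  then have "0 \<le> k" "k < 2"
    using \<open>p > 0\<close> by (simp_all add: zero_le_mult_iff mult_less_cancel_left_pos)
  then have "k = 0 \<or> k = 1" by arith
  moreover have "2 * r \<noteq> p" using \<open>odd p\<close> by (metis even_mult_iff even_numeral)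
  ultimately show ?thesis
    using k bounds same_half unfolding r_def[symmetric] r'_def[symmetric] by auto
qed

definition side_lengths :: "int \<Rightarrow> (int \<times> int) \<times> (int \<times> int) \<times> (int \<times> int) \<Rightarrow> int \<times> int \<times> int" where
  "side_lengths p t = (case t of (x1, x2, x3) \<Rightarrow> (sqdist p x1 x2, sqdist p x1 x3, sqdist p x2 x3))"

text \<open>The determinant of \<open>(z - x, y - x)\<close>; its sign, read off as the half of \<open>F_p\<close> it lies in,
  tells on which side of the line \<open>xy\<close> the point \<open>z\<close> is.\<close>
definition cross :: "int \<Rightarrow> int \<times> int \<Rightarrow> int \<times> int \<Rightarrow> int \<times> int \<Rightarrow> int" where
  "cross p x y z = ((fst z - fst x) * (snd y - snd x) - (snd z - snd x) * (fst y - fst x)) mod p"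

lemma sqdist_mod_coords:
  "sqdist p (a mod p, b mod p) (c mod p, d mod p) = sqdist p (a, b) (c, d)"
  unfolding sqdist_def fst_conv snd_conv by (metis mod_add_cong mod_diff_eq power_mod)

lemma sqdist_translate: "sqdist p (z1 + a, z2 + b) (z1 + c, z2 + d) = sqdist p (a, b) (c, d)"
  unfolding sqdist_def by simp

lemma sqdist_orth_linear:
  assumes "orth p (a, b, c, d)"
  shows "sqdist p (a * x1 + b * x2, c * x1 + d * x2) (a * y1 + b * y2, c * y1 + d * y2)
       = sqdist p (x1, x2) (y1, y2)"
proof -
  define u v where "u = x1 - y1" and "v = x2 - y2"
  have one_dvd: "p dvd X - 1" if "X mod p = 1" for X :: int
    using that by (metis mod_eq_dvd_iff mod_mod_trivial)
  have "p dvd (a * a + c * c) - 1" "p dvd a * b + c * d" "p dvd (b * b + d * d) - 1"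
    using assms one_dvd unfolding orth_def by (simp_all add: dvd_eq_mod_eq_0)
  then have "p dvd ((a * a + c * c) - 1) * u^2 + 2 * (a * b + c * d) * (u * v) + ((b * b + d * d) - 1) * v^2"
    by (metis dvd_add dvd_mult dvd_mult2)
  moreover have "((a * a + c * c) - 1) * u^2 + 2 * (a * b + c * d) * (u * v) + ((b * b + d * d) - 1) * v^2
      = ((a * u + b * v)^2 + (c * u + d * v)^2) - (u^2 + v^2)"
    by (simp add: algebra_simps power2_eq_square)
  ultimately show ?thesis
    unfolding sqdist_def u_def v_def by (simp add: mod_eq_dvd_iff algebra_simps)
qed

lemma sqdist_rigid:
  assumes "orth p M"
  shows "sqdist p (rigid p z M x) (rigid p z M y) = sqdist p x y"
proof -
  obtain a b c d where M: "M = (a, b, c, d)" by (cases M) auto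
  show ?thesis
    using sqdist_orth_linear[of p a b c d "fst x" "snd x" "fst y" "snd y"] assms
    unfolding rigid_def mat_app_def M
    by (simp add: sqdist_mod_coords sqdist_translate)
qed

lemma dvd_coords_if_dvd_dot_cross:
  fixes p u1 u2 v1 v2 :: int
  assumes "prime p" and "\<not> p dvd v1^2 + v2^2"
    and dot: "p dvd u1 * v1 + u2 * v2" and cross: "p dvd u1 * v2 - u2 * v1"
  shows "p dvd u1 \<and> p dvd u2"
proof -
  have "(v1^2 + v2^2) * u1 = (u1 * v1 + u2 * v2) * v1 + (u1 * v2 - u2 * v1) * v2"
    "(v1^2 + v2^2) * u2 = (u1 * v1 + u2 * v2) * v2 - (u1 * v2 - u2 * v1) * v1"
    by (simp_all add: algebra_simps power2_eq_square)
  then have "p dvd (v1^2 + v2^2) * u1" "p dvd (v1^2 + v2^2) * u2"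
    using dot cross by simp_all
  then show ?thesis using assms(1,2) by (simp add: prime_dvd_mult_iff)
qed

text \<open>In coordinates relative to \<open>x\<close>: \<open>u\<close>, \<open>w\<close> are the two candidate points and \<open>v\<close> is \<open>y\<close>.
  Equal distances to \<open>x\<close> and \<open>y\<close> force equal dot products with \<open>v\<close>, and then, by Lagrange's
  identity \<open>|u|\<^sup>2 |v|\<^sup>2 = (u\<cdot>v)\<^sup>2 + (u\<times>v)\<^sup>2\<close>, cross products that agree up to sign; the
  orientation hypothesis removes the sign.\<close>
lemma dvd_diff_if_dists_cong_same_half:
  fixes p u1 u2 w1 w2 v1 v2 :: int
  assumes "prime p" "odd p" and nondeg: "\<not> p dvd v1^2 + v2^2"
    and dist_x: "p dvd (u1^2 + u2^2) - (w1^2 + w2^2)"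
    and dist_y: "p dvd ((u1 - v1)^2 + (u2 - v2)^2) - ((w1 - v1)^2 + (w2 - v2)^2)"
    and same_half: "(2 * ((u1 * v2 - u2 * v1) mod p) < p) = (2 * ((w1 * v2 - w2 * v1) mod p) < p)"
  shows "p dvd u1 - w1 \<and> p dvd u2 - w2"
proof -
  define c c' s s' where "c = u1 * v1 + u2 * v2" and "c' = w1 * v1 + w2 * v2"
    and "s = u1 * v2 - u2 * v1" and "s' = w1 * v2 - w2 * v1"
  have "2 * (c - c') = ((u1^2 + u2^2) - (w1^2 + w2^2))
      - (((u1 - v1)^2 + (u2 - v2)^2) - ((w1 - v1)^2 + (w2 - v2)^2))"
    unfolding c_def c'_def by (simp add: algebra_simps power2_eq_square)
  then have "p dvd 2 * (c - c')" using dist_x dist_y by (metis dvd_diff)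
  then have dot: "p dvd c - c'" using odd_prime_dvd_mult_2_iff[OF assms(1,2)] by blast
  have "(s - s') * (s + s') = ((u1^2 + u2^2) - (w1^2 + w2^2)) * (v1^2 + v2^2) - (c - c') * (c + c')"
    unfolding c_def c'_def s_def s'_def by (simp add: algebra_simps power2_eq_square)
  then have "p dvd (s - s') * (s + s')" using dist_x dot by (metis dvd_diff dvd_mult2)
  then have "p dvd s - s' \<or> p dvd s + s'" using \<open>prime p\<close> by (simp add: prime_dvd_mult_iff)
  moreover have "p dvd s + s' \<Longrightarrow> s mod p = s' mod p"
    using mod_eq_if_dvd_add_same_half[OF \<open>odd p\<close> prime_gt_0_int[OF \<open>prime p\<close>]] same_half
    unfolding s_def s'_def by blast
  ultimately have cross: "p dvd s - s'" by (auto simp: mod_eq_dvd_iff)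
  show ?thesis
    using dvd_coords_if_dvd_dot_cross[OF \<open>prime p\<close> nondeg, of "u1 - w1" "u2 - w2"] dot cross
    unfolding c_def c'_def s_def s'_def by (simp add: algebra_simps)
qed

lemma Fp_point_eq_if_sqdist_eq_cross_same_half:
  assumes "prime p" "odd p" and "sqdist p x y \<noteq> 0"
    and "z \<in> Fp p \<times> Fp p" "z' \<in> Fp p \<times> Fp p"
    and "sqdist p x z = sqdist p x z'" "sqdist p y z = sqdist p y z'"
    and "(2 * cross p x y z < p) = (2 * cross p x y z' < p)"
  shows "z = z'"
proof -
  obtain x1 x2 y1 y2 a1 a2 b1 b2 where pts: "x = (x1, x2)" "y = (y1, y2)" "z = (a1, a2)" "z' = (b1, b2)"
    by (cases x, cases y, cases z, cases z') auto
  have "p dvd (a1 - x1) - (b1 - x1) \<and> p dvd (a2 - x2) - (b2 - x2)"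
  proof (rule dvd_diff_if_dists_cong_same_half[OF assms(1,2)])
    show "\<not> p dvd (y1 - x1)^2 + (y2 - x2)^2"
      using assms(3) unfolding sqdist_def pts by (simp add: dvd_eq_mod_eq_0 power2_commute)
    show "p dvd ((a1 - x1)^2 + (a2 - x2)^2) - ((b1 - x1)^2 + (b2 - x2)^2)"
      using assms(6) unfolding sqdist_def pts by (simp add: mod_eq_dvd_iff power2_commute)
    show "p dvd ((a1 - x1 - (y1 - x1))^2 + (a2 - x2 - (y2 - x2))^2)
        - ((b1 - x1 - (y1 - x1))^2 + (b2 - x2 - (y2 - x2))^2)"
      using assms(7) unfolding sqdist_def pts by (simp add: mod_eq_dvd_iff power2_commute)
    show "(2 * (((a1 - x1) * (y2 - x2) - (a2 - x2) * (y1 - x1)) mod p) < p)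
        = (2 * (((b1 - x1) * (y2 - x2) - (b2 - x2) * (y1 - x1)) mod p) < p)"
      using assms(8) unfolding cross_def pts by simp
  qed
  then show ?thesis
    using assms(4,5) Fp_eq_if_dvd_diff unfolding pts by auto
qed

lemma finite_Fp_sq: "finite (Fp p \<times> Fp p)"
  unfolding Fp_def by simp

lemma congruent_refl:
  assumes "p > 1" and "t \<in> triangles (Fp p \<times> Fp p)"
  shows "congruent p t t"
proof -
  obtain x1 x2 x3 where t: "t = (x1, x2, x3)" by (rule prod_cases3)
  have id: "rigid p (0, 0) (1, 0, 0, 1) x = x" if "x \<in> Fp p \<times> Fp p" for x
    using that unfolding rigid_def mat_app_def Fp_def by (cases x) auto
  have "orth p (1, 0, 0, 1)" "(0, 0) \<in> Fp p \<times> Fp p"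
    using assms(1) unfolding orth_def Fp_def by auto
  moreover have "x1 \<in> Fp p \<times> Fp p" "x2 \<in> Fp p \<times> Fp p" "x3 \<in> Fp p \<times> Fp p"
    using assms(2) unfolding t triangles_def by auto
  ultimately show ?thesis
    unfolding congruent_def t prod.case using id by blast
qed

lemma congruent_side_lengths_eq:
  assumes "congruent p t s"
  shows "side_lengths p s = side_lengths p t"
proof -
  obtain x1 x2 x3 y1 y2 y3 where ts: "t = (x1, x2, x3)" "s = (y1, y2, y3)"
    by (metis prod_cases3)
  then obtain M z where "orth p M" and "rigid p z M x1 = y1" "rigid p z M x2 = y2" "rigid p z M x3 = y3"
    using assms unfolding congruent_def by auto
  then show ?thesis unfolding ts side_lengths_def prod.case by (metis sqdist_rigid)
qed

lemma card_side_lengths_le_card_T22: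
  assumes "p > 1" and "E \<subseteq> Fp p \<times> Fp p"
  shows "card (side_lengths p ` triangles E) \<le> card (T22 p E)"
proof -
  define cls where "cls t = {s \<in> triangles (Fp p \<times> Fp p). congruent p t s}" for t
  have "finite (triangles E)"
    using finite_subset[OF assms(2) finite_Fp_sq] unfolding triangles_def by simp
  then have "finite (T22 p E)" unfolding T22_def by simp
  have "side_lengths p t = side_lengths p (SOME s. s \<in> cls t)" if "t \<in> triangles E" for t
  proof -
    have "t \<in> triangles (Fp p \<times> Fp p)" using that assms(2) unfolding triangles_def by auto
    then have "t \<in> cls t" using congruent_refl[OF assms(1)] unfolding cls_def by simp
    then have "(SOME s. s \<in> cls t) \<in> cls t" by (rule someI)
    then show ?thesis unfolding cls_def by (metis (mono_tags) congruent_side_lengths_eq mem_Collect_eq)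
  qed
  then have "side_lengths p ` triangles E = (\<lambda>C. side_lengths p (SOME s. s \<in> C)) ` T22 p E"
    unfolding T22_def cls_def[symmetric] by (auto simp: image_image)
  then show ?thesis by (simp add: card_image_le \<open>finite (T22 p E)\<close>)
qed

lemma card_nonzero_Delta_mult_le:
  assumes "prime p" "odd p" and E: "E \<subseteq> Fp p \<times> Fp p"
  shows "card (Delta p E - {0}) * card E \<le> 2 * card (side_lengths p ` triangles E)"
proof -
  have "\<forall>d \<in> Delta p E. \<exists>xy. fst xy \<in> E \<and> snd xy \<in> E \<and> sqdist p (fst xy) (snd xy) = d"
    unfolding Delta_def by force
  then obtain pick where pick: "\<And>d. d \<in> Delta p E \<Longrightarrow>
      fst (pick d) \<in> E \<and> snd (pick d) \<in> E \<and> sqdist p (fst (pick d)) (snd (pick d)) = d"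
    by metis
  define h where "h = (\<lambda>(d, z). (side_lengths p (fst (pick d), snd (pick d), z),
                                 2 * cross p (fst (pick d)) (snd (pick d)) z < p))"
  have determined: "d = d' \<and> z = z'"
    if d: "d \<in> Delta p E" "d \<noteq> 0" "z \<in> E" and d': "d' \<in> Delta p E" "z' \<in> E"
      and eq: "h (d, z) = h (d', z')" for d z d' z'
  proof -
    have "side_lengths p (fst (pick d), snd (pick d), z) = side_lengths p (fst (pick d'), snd (pick d'), z')"
      using eq unfolding h_def by simp
    then have "d = d'" using pick[OF d(1)] pick[OF d'(1)] unfolding side_lengths_def by simp
    moreover have "z = z'"
    proof (rule Fp_point_eq_if_sqdist_eq_cross_same_half[OF assms(1,2)])
      show "sqdist p (fst (pick d)) (snd (pick d)) \<noteq> 0" using pick[OF d(1)] d(2) by simp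
      show "z \<in> Fp p \<times> Fp p" "z' \<in> Fp p \<times> Fp p" using d(3) d'(2) E by auto
      show "sqdist p (fst (pick d)) z = sqdist p (fst (pick d)) z'"
        "sqdist p (snd (pick d)) z = sqdist p (snd (pick d)) z'"
        "(2 * cross p (fst (pick d)) (snd (pick d)) z < p) = (2 * cross p (fst (pick d)) (snd (pick d)) z' < p)"
        using eq unfolding \<open>d = d'\<close> h_def side_lengths_def by simp_all
    qed
    ultimately show ?thesis ..
  qed
  have "inj_on h ((Delta p E - {0}) \<times> E)"
  proof (rule inj_onI)
    fix a b assume "a \<in> (Delta p E - {0}) \<times> E" "b \<in> (Delta p E - {0}) \<times> E" "h a = h b"
    then show "a = b" using determined by (cases a, cases b) blast
  qed
  moreover have "h ` ((Delta p E - {0}) \<times> E) \<subseteq> side_lengths p ` triangles E \<times> UNIV"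
    using pick unfolding h_def triangles_def by auto
  moreover have "finite (side_lengths p ` triangles E \<times> (UNIV :: bool set))"
    using finite_subset[OF E finite_Fp_sq] unfolding triangles_def by simp
  ultimately have "card ((Delta p E - {0}) \<times> E) \<le> card (side_lengths p ` triangles E \<times> (UNIV :: bool set))"
    by (rule card_inj_on_le)
  then show ?thesis by (simp add: card_cartesian_product)
qed

lemma two_le_card_Delta:
  assumes "prime p" and "A \<subseteq> Fp p" and "a \<in> A" "b \<in> A" "a \<noteq> b"
  shows "2 \<le> card (Delta p (A \<times> A))"
proof -
  have "a \<in> Fp p" "b \<in> Fp p" using assms(2-4) by auto
  then have "\<not> p dvd a - b" using Fp_eq_if_dvd_diff \<open>a \<noteq> b\<close> by blast
  then have "\<not> p dvd (a - b)^2" using \<open>prime p\<close> by (simp add: prime_dvd_power_iff)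
  then have "sqdist p (a, a) (b, a) \<noteq> 0" unfolding sqdist_def by (simp add: dvd_eq_mod_eq_0)
  moreover have "{sqdist p (a, a) (a, a), sqdist p (a, a) (b, a)} \<subseteq> Delta p (A \<times> A)"
    using assms(3,4) unfolding Delta_def by blast
  moreover have "finite (Delta p (A \<times> A))"
  proof -
    have "Delta p (A \<times> A) = (\<lambda>(x, y). sqdist p x y) ` ((A \<times> A) \<times> (A \<times> A))"
      unfolding Delta_def by auto
    then show ?thesis using finite_subset[OF assms(2)] unfolding Fp_def by simp
  qed
  moreover have "sqdist p (a, a) (a, a) = 0" unfolding sqdist_def by simp
  ultimately show ?thesis by (metis card_2_iff card_mono)
qed

theorem lemma2p5:
  fixes p :: int and A :: "int set"
  assumes "prime p" and "odd p" and "A \<subseteq> Fp p"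
  shows "real (card (T22 p (A \<times> A)))
           \<ge> 1/6 * (real (card A)^2 - 2) * real (card (Delta p (A \<times> A)))"
proof (cases "card A \<le> 1")
  case True
  then have "real (card A)^2 \<le> 1" by (simp add: power_le_one)
  then have "(real (card A)^2 - 2) * real (card (Delta p (A \<times> A))) \<le> 0"
    by (intro mult_nonpos_nonneg) simp_all
  then show ?thesis by simp
next
  case False
  define n k c where "n = card A" and "k = card (Delta p (A \<times> A))" and "c = card (T22 p (A \<times> A))"
  have E: "A \<times> A \<subseteq> Fp p \<times> Fp p" using assms(3) by auto
  have "finite A" using finite_subset[OF assms(3)] unfolding Fp_def by simp
  then obtain a b where "a \<in> A" "b \<in> A" "a \<noteq> b"
    using False card_le_Suc0_iff_eq[OF \<open>finite A\<close>] by auto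
  then have "2 \<le> k" unfolding k_def using two_le_card_Delta[OF assms(1,3)] by blast
  have "k - 1 \<le> card (Delta p (A \<times> A) - {0})"
    unfolding k_def using diff_card_le_card_Diff[of "{0}" "Delta p (A \<times> A)"] by simp
  then have "(k - 1) * (n * n) \<le> card (Delta p (A \<times> A) - {0}) * card (A \<times> A)"
    unfolding n_def by (simp add: card_cartesian_product)
  also have "\<dots> \<le> 2 * card (side_lengths p ` triangles (A \<times> A))"
    by (rule card_nonzero_Delta_mult_le[OF assms(1,2) E])
  also have "\<dots> \<le> 2 * c"
    unfolding c_def using card_side_lengths_le_card_T22[OF prime_gt_1_int[OF assms(1)] E] by simp
  finally have "real ((k - 1) * (n * n)) \<le> real (2 * c)" by (simp only: of_nat_le_iff)
  then have "(real k - 1) * real n ^ 2 \<le> 2 * real c"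
    using \<open>2 \<le> k\<close> by (simp add: of_nat_diff power2_eq_square)
  moreover have "0 \<le> (2 * real k - 3) * real n ^ 2" using \<open>2 \<le> k\<close> by simp
  ultimately show ?thesis unfolding n_def[symmetric] k_def[symmetric] c_def[symmetric]
    by (simp add: algebra_simps)
qed

end
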